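(* Consider the forward-Euler DG update of cell means $$\bar{\mathbf u}_j^{n+1}=\bar{\mathbf u}_j^{n}-\frac{\Delta t}{\Delta x}\Big(\hat{\mathbf f}(\mathbf u^n_{jQ},\mathbf u^n_{(j+1)1})-\hat{\mathbf f}(\mathbf u^n_{(j-1)Q},\mathbf u^n_{j1})\Big)+\Delta t\sum_{q=1}^Q w_q\Big(-\sigma_a\mathbf u^n_{jq}+\sigma_s\mathbf r(\mathbf u^n_{jq})+\langle\mathbf b\,S(t^n,x_{jq},\cdot)\rangle\Big),$$ where $\hat{\mathbf f}(\mathbf v,\mathbf w)=\tfrac12\big(\mathbf f(\mathbf v)+\mathbf f(\mathbf w)-(\mathbf w-\mathbf v)\big)$ and $\bar{\mathbf u}^n_j=\frac1{\Delta x}\int_{I_j}\mathbf u_j(t^n,x)\,dx$. Assume $\sigma_a,\sigma_s\ge0$ are constants, $\sigma_t:=\sigma_a+\sigma_s$, $S\ge0$, $k\le 2Q-3$, that all point values $\mathbf u^n_{jq}$ ($q=1,\dots,Q$) together with $\mathbf u^n_{(j-1)Q}$ and $\mathbf u^n_{(j+1)1}$ lie in $\mathcal R_{\mathbf b}$, and that the CFL condition $$\frac{\Delta t}{\Delta x}<w_Q\,(1-\sigma_t\Delta t)$$ holds, where $w_Q$ is the last weight of the $Q$-point Gauss–Lobatto rule on $[-1/2,1/2]$. Then $\bar{\mathbf u}^{n+1}_j\in\mathcal R_{\mathbf b}$. The same conclusion holds with $\mathcal R_{\mathbf b}$ replaced by the numerically realizable set $\mathcal R^{\mathcal Q}_{\mathbf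 b}$ when all angular integrals (in $\mathbf f$, $\mathbf r$, $\langle\mathbf bS\rangle$ and the closure) are replaced by the angular quadrature $\mathcal Q$.
   Context: Setting: slab-geometry kinetic equation $\partial_t\psi+\mu\partial_x\psi+\sigma_a\psi=\sigma_s\mathcal C(\psi)+S$, with collision operator $\mathcal C(\psi)(\mu)=\int_{-1}^1T(\mu,\mu')\psi(\mu')d\mu'-\int_{-1}^1T(\mu',\mu)\psi(\mu)d\mu'$, kernel $T>0$ with $\int_{-1}^1T(\mu',\mu)d\mu'\equiv1$. Notation: $\langle\phi\rangle=\int_{-1}^1\phi\,d\mu$; basis $\mathbf b=(b_0,\dots,b_N)^T$ of bounded functions with $b_0\equiv1$; realizable set $\mathcal R_{\mathbf b}=\{\mathbf u:\exists\phi\ge0,\ \langle\phi\rangle>0,\ \mathbf u=\langle\mathbf b\phi\rangle\}$. Angular quadrature $\mathcal Q$: nodes $\mu_i\in[-1,1]$, weights $w_i>0$, $i=1,\dots,n_{\mathcal Q}$; numerically realizable set $\mathcal R^{\mathcal Q}_{\mathbf b}=\{\mathbf u:\exists f_i>0,\ \mathbf u=\sum_i w_i\mathbf b(\mu_i)f_i\}$. Maxwell–Boltzmann entropy closure: for realizable $\mathbf u$ the ansatz $\hat\psi_{\mathbf u}=\exp(\mathbf b^T\hat{\boldsymbol\alpha}(\mathbf u))$ with $\langle\mathbf b\hat\psi_{\mathbf u}\rangle=\mathbf u$ exists; $\mathbf f(\mathbf u)=\langle\mu\mathbf b\hat\psi_{\mathbf u}\rangle$, $\mathbf r(\mathbf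 u)=\langle\mathbf b\,\mathcal C(\hat\psi_{\mathbf u})\rangle$. Spatial discretization: cells $I_j=(x_{j-1/2},x_{j+1/2})$ of width $\Delta x$ with centers $x_j$; on $I_j$ the approximation $\mathbf u_j(t,x)$ is a polynomial in $x$ of degree at most $k$ (expanded in Legendre polynomials scaled to the cell, so the cell mean is the zeroth coefficient). The $Q$-point Gauss–Lobatto rule on $[-1/2,1/2]$ has nodes $-1/2=y_1<\dots<y_Q=1/2$ and positive weights $w_q$ summing to $1$ (with $w_1=w_Q$), exact for polynomials of degree $\le 2Q-3$; $x_{jq}=x_j+y_q\Delta x$ and $\mathbf u^n_{jq}=\mathbf u_j(t^n,x_{jq})$ (so $\mathbf u^n_{j1}$, $\mathbf u^n_{jQ}$ are the values at the left and right cell edges; for boundary cells the neighbor values are given boundary moment vectors). *)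

theory Defs
  imports "HOL-Analysis.Analysis" "HOL-Computational_Algebra.Polynomial"
begin

text \<open>Moment vectors are functions nat => real; only components 0..N matter.
  Basis functions: b l mu (l = 0..N), angular variable mu in [-1,1].\<close>

type_synonym mvec = "nat \<Rightarrow> real"

definition ang :: "(real \<Rightarrow> real) \<Rightarrow> real" where
  "ang \<phi> = set_lebesgue_integral lborel {-1..1::real} \<phi>"

definition angQ :: "nat \<Rightarrow> (nat \<Rightarrow> real) \<Rightarrow> (nat \<Rightarrow> real) \<Rightarrow> (real \<Rightarrow> real) \<Rightarrow> real" where
  "angQ nQ mu wt \<phi> = (\<Sum>i=1..nQ. wt i * \<phi> (mu i))"

definition realizable :: "nat \<Rightarrow> (nat \<Rightarrow> real \<Rightarrow> real) \<Rightarrow> mvec \<Rightarrow> bool" where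
  "realizable N b u \<longleftrightarrow>
     (\<exists>\<phi>. (\<forall>\<mu>\<in>{-1..1}. 0 \<le> \<phi> \<mu>) \<and> set_integrable lborel {-1..1::real} \<phi>
        \<and> (\<forall>l\<le>N. set_integrable lborel {-1..1::real} (\<lambda>\<mu>. b l \<mu> * \<phi> \<mu>))
        \<and> ang \<phi> > 0 \<and> (\<forall>l\<le>N. u l = ang (\<lambda>\<mu>. b l \<mu> * \<phi> \<mu>)))"

definition realizableQ :: "nat \<Rightarrow> (nat \<Rightarrow> real \<Rightarrow> real) \<Rightarrow> nat \<Rightarrow> (nat \<Rightarrow> real) \<Rightarrow> (nat \<Rightarrow> real)
    \<Rightarrow> mvec \<Rightarrow> bool" where
  "realizableQ N b nQ mu wt u \<longleftrightarrow>
     (\<exists>f. (\<forall>i\<in>{1..nQ}. 0 < f i) \<and> (\<forall>l\<le>N. u l = (\<Sum>i=1..nQ. wt i * b l (mu i) * f i)))"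

definition mb_ansatz :: "nat \<Rightarrow> (nat \<Rightarrow> real \<Rightarrow> real) \<Rightarrow> mvec \<Rightarrow> real \<Rightarrow> real" where
  "mb_ansatz N b \<alpha> \<mu> = exp (\<Sum>l\<le>N. \<alpha> l * b l \<mu>)"

definition is_mb_closure :: "((real \<Rightarrow> real) \<Rightarrow> real) \<Rightarrow> (mvec \<Rightarrow> bool) \<Rightarrow> nat
    \<Rightarrow> (nat \<Rightarrow> real \<Rightarrow> real) \<Rightarrow> (mvec \<Rightarrow> mvec) \<Rightarrow> bool" where
  "is_mb_closure A R N b \<alpha> \<longleftrightarrow>
     (\<forall>u. R u \<longrightarrow> (\<forall>l\<le>N. A (\<lambda>\<mu>. b l \<mu> * mb_ansatz N b (\<alpha> u) \<mu>) = u l))"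

definition mflux :: "((real \<Rightarrow> real) \<Rightarrow> real) \<Rightarrow> nat \<Rightarrow> (nat \<Rightarrow> real \<Rightarrow> real)
    \<Rightarrow> (mvec \<Rightarrow> mvec) \<Rightarrow> mvec \<Rightarrow> mvec" where
  "mflux A N b \<alpha> u = (\<lambda>l. A (\<lambda>\<mu>. \<mu> * b l \<mu> * mb_ansatz N b (\<alpha> u) \<mu>))"

definition coll :: "((real \<Rightarrow> real) \<Rightarrow> real) \<Rightarrow> (real \<Rightarrow> real \<Rightarrow> real) \<Rightarrow> (real \<Rightarrow> real) \<Rightarrow> real \<Rightarrow> real" where
  "coll A T \<psi> \<mu> = A (\<lambda>\<mu>'. T \<mu> \<mu>' * \<psi> \<mu>') - A (\<lambda>\<mu>'. T \<mu>' \<mu>) * \<psi> \<mu>"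

definition mcoll :: "((real \<Rightarrow> real) \<Rightarrow> real) \<Rightarrow> (real \<Rightarrow> real \<Rightarrow> real) \<Rightarrow> nat
    \<Rightarrow> (nat \<Rightarrow> real \<Rightarrow> real) \<Rightarrow> (mvec \<Rightarrow> mvec) \<Rightarrow> mvec \<Rightarrow> mvec" where
  "mcoll A T N b \<alpha> u = (\<lambda>l. A (\<lambda>\<mu>. b l \<mu> * coll A T (mb_ansatz N b (\<alpha> u)) \<mu>))"

definition num_flux :: "(mvec \<Rightarrow> mvec) \<Rightarrow> mvec \<Rightarrow> mvec \<Rightarrow> mvec" where
  "num_flux F v w = (\<lambda>l. (F v l + F w l - (w l - v l)) / 2)"

definition gauss_lobatto :: "nat \<Rightarrow> (nat \<Rightarrow> real) \<Rightarrow> (nat \<Rightarrow> real) \<Rightarrow> bool" where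
  "gauss_lobatto Q y w \<longleftrightarrow>
     2 \<le> Q \<and> y 1 = -1/2 \<and> y Q = 1/2 \<and> (\<forall>q\<in>{1..<Q}. y q < y (Suc q))
     \<and> (\<forall>q\<in>{1..Q}. 0 < w q) \<and> (\<Sum>q=1..Q. w q) = 1 \<and> w 1 = w Q
     \<and> (\<forall>p::real poly. degree p \<le> 2*Q - 3 \<longrightarrow>
          integral {-1/2..1/2} (poly p) = (\<Sum>q=1..Q. w q * poly p (y q)))"

definition pt_val :: "(nat \<Rightarrow> real poly) \<Rightarrow> real \<Rightarrow> real \<Rightarrow> (nat \<Rightarrow> real) \<Rightarrow> nat \<Rightarrow> mvec" where
  "pt_val p xj dx y q = (\<lambda>l. poly (p l) (xj + y q * dx))"

definition cell_mean :: "(nat \<Rightarrow> real poly) \<Rightarrow> real \<Rightarrow> real \<Rightarrow> mvec" where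
  "cell_mean p xj dx = (\<lambda>l. integral {xj - dx/2 .. xj + dx/2} (poly (p l)) / dx)"

definition dg_mean_update ::
  "((real \<Rightarrow> real) \<Rightarrow> real) \<Rightarrow> (real \<Rightarrow> real \<Rightarrow> real) \<Rightarrow> nat \<Rightarrow> (nat \<Rightarrow> real \<Rightarrow> real)
   \<Rightarrow> (mvec \<Rightarrow> mvec) \<Rightarrow> real \<Rightarrow> real \<Rightarrow> (real \<Rightarrow> real \<Rightarrow> real \<Rightarrow> real) \<Rightarrow> real
   \<Rightarrow> real \<Rightarrow> real \<Rightarrow> real \<Rightarrow> nat \<Rightarrow> (nat \<Rightarrow> real) \<Rightarrow> (nat \<Rightarrow> real)
   \<Rightarrow> (nat \<Rightarrow> real poly) \<Rightarrow> mvec \<Rightarrow> mvec \<Rightarrow> mvec" where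
  "dg_mean_update A T N b \<alpha> \<sigma>a \<sigma>s S tn xj dx dt Q y w p uL uR =
     (\<lambda>l. cell_mean p xj dx l
        - dt / dx * (num_flux (mflux A N b \<alpha>) (pt_val p xj dx y Q) uR l
                     - num_flux (mflux A N b \<alpha>) uL (pt_val p xj dx y 1) l)
        + dt * (\<Sum>q=1..Q. w q * (- \<sigma>a * pt_val p xj dx y q l
                               + \<sigma>s * mcoll A T N b \<alpha> (pt_val p xj dx y q) l
                               + A (\<lambda>\<mu>. b l \<mu> * S tn (xj + y q * dx) \<mu>))))"

end

theory Submission imports Defs begin

text \<open>
  By the Maxwell--Boltzmann closure, every moment vector entering the update is the moment
  vector of an ansatz density: \<open>\<psi>\<^sub>q\<close> at the Gauss--Lobatto nodes of the cell and \<open>\<psi>\<^sub>L\<close>,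
  \<open>\<psi>\<^sub>R\<close> at the neighbouring cell edges. The Lax--Friedrichs flux is then the moment of the
  kinetic flux \<open>F(\<psi>\<^sub>v, \<psi>\<^sub>w) = ((1 + \<mu>) \<psi>\<^sub>v - (1 - \<mu>) \<psi>\<^sub>w) / 2\<close>, and since the Gauss--Lobatto
  rule is exact on the cell polynomials, the updated cell mean is the moment vector of
  \<open>\<phi> = \<Sum>\<^sub>q w\<^sub>q ((1 - \<sigma>\<^sub>t \<Delta>t) \<psi>\<^sub>q + \<Delta>t \<sigma>\<^sub>s G(\<psi>\<^sub>q) + \<Delta>t S\<^sub>q) - (\<Delta>t/\<Delta>x) (F(\<psi>\<^sub>Q, \<psi>\<^sub>R) - F(\<psi>\<^sub>L, \<psi>\<^sub>1))\<close>,
  with \<open>G\<close> the gain part of the collision operator. For \<open>|\<mu>| \<le> 1\<close> the flux difference is at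
  most \<open>\<psi>\<^sub>1 + \<psi>\<^sub>Q\<close>, while the sum dominates \<open>w\<^sub>Q (1 - \<sigma>\<^sub>t \<Delta>t) (\<psi>\<^sub>1 + \<psi>\<^sub>Q)\<close> because \<open>w\<^sub>1 = w\<^sub>Q\<close>;
  so the CFL condition makes \<open>\<phi>\<close> strictly positive.
\<close>

section \<open>Linear angular functionals\<close>

text \<open>
  The angular integral, abstracted to what the argument uses: a linear functional on a
  class \<open>K\<close> of admissible integrands that only depends on their values on \<open>D\<close>. The exact
  integral over \<open>[-1, 1]\<close> and the angular quadrature are both instances.
\<close>

locale moment_functional =
  fixes D :: "real set" and K :: "(real \<Rightarrow> real) \<Rightarrow> bool" and A :: "(real \<Rightarrow> real) \<Rightarrow> real"
  assumes K_zero: "K (\<lambda>x. 0)"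
    and K_add: "K f \<Longrightarrow> K g \<Longrightarrow> K (\<lambda>x. f x + g x)"
    and K_scale: "K f \<Longrightarrow> K (\<lambda>x. c * f x)"
    and A_add: "K f \<Longrightarrow> K g \<Longrightarrow> A (\<lambda>x. f x + g x) = A f + A g"
    and A_scale: "K f \<Longrightarrow> A (\<lambda>x. c * f x) = c * A f"
    and A_cong: "(\<And>x. x \<in> D \<Longrightarrow> f x = g x) \<Longrightarrow> A f = A g"
begin

lemma K_diff: "K f \<Longrightarrow> K g \<Longrightarrow> K (\<lambda>x. f x - g x)"
  using K_add[of f "\<lambda>x. (-1) * g x"] K_scale[of g "-1"] by simp

lemma A_diff: "K f \<Longrightarrow> K g \<Longrightarrow> A (\<lambda>x. f x - g x) = A f - A g"
  using A_add[of f "\<lambda>x. (-1) * g x"] K_scale[of g "-1"] A_scale[of g "-1"] by simp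

lemma K_sum_A_sum:
  assumes "finite F" "\<And>q. q \<in> F \<Longrightarrow> K (f q)"
  shows "K (\<lambda>x. \<Sum>q\<in>F. f q x) \<and> A (\<lambda>x. \<Sum>q\<in>F. f q x) = (\<Sum>q\<in>F. A (f q))"
  using assms
proof (induction F rule: finite_induct)
  case empty
  show ?case using K_zero A_scale[OF K_zero, of 0] by simp
next
  case (insert q F)
  then show ?case by (simp add: K_add A_add)
qed

lemma K_sum: "finite F \<Longrightarrow> (\<And>q. q \<in> F \<Longrightarrow> K (f q)) \<Longrightarrow> K (\<lambda>x. \<Sum>q\<in>F. f q x)"
  using K_sum_A_sum by blast

lemma A_sum:
  "finite F \<Longrightarrow> (\<And>q. q \<in> F \<Longrightarrow> K (f q)) \<Longrightarrow> A (\<lambda>x. \<Sum>q\<in>F. f q x) = (\<Sum>q\<in>F. A (f q))"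
  using K_sum_A_sum by blast

lemma weighted_moment_functional:
  "moment_functional D (\<lambda>g. K (\<lambda>x. \<beta> x * g x)) (\<lambda>g. A (\<lambda>x. \<beta> x * g x))"
proof unfold_locales
  show "A (\<lambda>x. \<beta> x * f x) = A (\<lambda>x. \<beta> x * g x)" if "\<And>x. x \<in> D \<Longrightarrow> f x = g x" for f g
    using that by (intro A_cong) simp
qed (simp_all add: K_zero distrib_left mult.left_commute K_add K_scale A_add A_scale)

end

lemma moment_functional_ang: "moment_functional {-1..1} (set_integrable lborel {-1..1::real}) ang"
proof unfold_locales
  show "set_integrable lborel {-1..1::real} (\<lambda>x. 0)" by (simp add: set_integrable_def)
qed (auto simp: ang_def intro: set_lebesgue_integral_cong)

lemma moment_functional_angQ: "moment_functional (mu ` {1..nQ}) (\<lambda>_. True) (angQ nQ mu wt)"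
  by unfold_locales (auto simp: angQ_def distrib_left sum.distrib sum_distrib_left mult.left_commute)

lemma ang_pos:
  assumes int: "set_integrable lborel {-1..1::real} \<phi>"
    and pos: "\<And>\<mu>. \<mu> \<in> {-1..1} \<Longrightarrow> 0 < \<phi> \<mu>"
  shows "0 < ang \<phi>"
proof -
  have "0 \<le> ang \<phi>"
    unfolding ang_def set_lebesgue_integral_def using pos
    by (intro Bochner_Integration.integral_nonneg) (auto simp: indicator_def less_imp_le)
  moreover have "ang \<phi> \<noteq> 0"
  proof
    assume zero: "ang \<phi> = 0"
    have idem: "indicator {-1..1} x * (indicator {-1..1} x * \<phi> x) = indicator {-1..1} x * \<phi> x" for x :: real
      by (simp add: indicator_def)
    have "{-1..1::real} \<in> null_sets lborel"
      using int pos zero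
      by (intro null_if_pos_func_has_zero_int[where f = "\<lambda>x. indicator {-1..1} x * \<phi> x"])
         (auto simp: ang_def set_integrable_def set_lebesgue_integral_def idem)
    then show False by (simp add: null_sets_def)
  qed
  ultimately show ?thesis by linarith
qed

section \<open>Bounded Borel functions on the angular interval\<close>

definition bounded_borel :: "(real \<Rightarrow> real) \<Rightarrow> bool" where
  "bounded_borel f \<longleftrightarrow> f \<in> borel_measurable borel \<and> (\<exists>B. \<forall>\<mu>\<in>{-1..1}. \<bar>f \<mu>\<bar> \<le> B)"

lemma set_integrable_bounded_borel:
  assumes "bounded_borel f"
  shows "set_integrable lborel {-1..1::real} f"
proof -
  obtain B where "f \<in> borel_measurable borel" "\<forall>\<mu>\<in>{-1..1}. \<bar>f \<mu>\<bar> \<le> B"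
    using assms unfolding bounded_borel_def by blast
  then show ?thesis
    unfolding set_integrable_def by (intro integrableI_bounded_set_indicator[where B=B]) auto
qed

lemma bounded_borel_const: "bounded_borel (\<lambda>x. c)"
  unfolding bounded_borel_def by auto

lemma bounded_borel_ident: "bounded_borel (\<lambda>x. x)"
  unfolding bounded_borel_def by (auto intro!: exI[of _ 1])

lemma bounded_borel_mult:
  assumes "bounded_borel f" "bounded_borel g"
  shows "bounded_borel (\<lambda>x. f x * g x)"
proof -
  obtain B C where f: "f \<in> borel_measurable borel" "\<forall>\<mu>\<in>{-1..1}. \<bar>f \<mu>\<bar> \<le> B"
    and g: "g \<in> borel_measurable borel" "\<forall>\<mu>\<in>{-1..1}. \<bar>g \<mu>\<bar> \<le> C"
    using assms unfolding bounded_borel_def by blast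
  have "\<bar>f \<mu> * g \<mu>\<bar> \<le> B * C" if "\<mu> \<in> {-1..1}" for \<mu>
    using f(2) g(2) that by (simp add: abs_mult mult_mono')
  then show ?thesis
    unfolding bounded_borel_def using f(1) g(1) by (auto intro!: exI[of _ "B * C"])
qed

lemma set_integrable_mult_bounded_borel:
  assumes f: "set_integrable lborel {-1..1::real} f" and g: "bounded_borel g"
  shows "set_integrable lborel {-1..1::real} (\<lambda>x. g x * f x)"
proof -
  obtain B where B: "\<forall>\<mu>\<in>{-1..1}. \<bar>g \<mu>\<bar> \<le> B" and g_meas: "g \<in> borel_measurable borel"
    using g unfolding bounded_borel_def by blast
  have "(\<lambda>x. indicator {-1..1::real} x *\<^sub>R f x) \<in> borel_measurable lborel"
    using f unfolding set_integrable_def by (rule borel_measurable_integrable)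
  then have "(\<lambda>x. g x * (indicator {-1..1::real} x *\<^sub>R f x)) \<in> borel_measurable lborel"
    using g_meas by measurable
  then have meas: "set_borel_measurable lborel {-1..1} (\<lambda>x. g x * f x)"
    unfolding set_borel_measurable_def by (simp add: mult.left_commute)
  show ?thesis
  proof (rule set_integrable_bound[OF _ meas])
    show "set_integrable lborel {-1..1} (\<lambda>x. B * f x)" using f by simp
    show "AE x in lborel. x \<in> {-1..1} \<longrightarrow> norm (g x * f x) \<le> norm (B * f x)"
      using B by (intro AE_I2) (force simp: abs_mult intro: mult_right_mono)
  qed
qed

lemma bounded_borel_mb_ansatz:
  assumes meas: "\<And>l. l \<le> N \<Longrightarrow> b l \<in> borel_measurable borel"
    and bdd: "\<exists>B. \<forall>l\<le>N. \<forall>\<mu>\<in>{-1..1}. \<bar>b l \<mu>\<bar> \<le> B"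
  shows "bounded_borel (mb_ansatz N b a)"
proof -
  obtain B where B: "\<forall>l\<le>N. \<forall>\<mu>\<in>{-1..1}. \<bar>b l \<mu>\<bar> \<le> B" using bdd by blast
  have exponent: "(\<Sum>l\<le>N. a l * b l \<mu>) \<le> (\<Sum>l\<le>N. \<bar>a l\<bar> * B)" if \<mu>: "\<mu> \<in> {-1..1}" for \<mu>
  proof (rule sum_mono)
    fix l assume "l \<in> {..N}"
    have "a l * b l \<mu> \<le> \<bar>a l\<bar> * \<bar>b l \<mu>\<bar>" by (metis abs_ge_self abs_mult)
    also have "\<dots> \<le> \<bar>a l\<bar> * B" using B \<mu> \<open>l \<in> {..N}\<close> by (intro mult_left_mono) auto
    finally show "a l * b l \<mu> \<le> \<bar>a l\<bar> * B" .
  qed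
  have "(\<lambda>\<mu>. \<Sum>l\<le>N. a l * b l \<mu>) \<in> borel_measurable borel"
    using meas by (intro borel_measurable_sum borel_measurable_times) auto
  then have "mb_ansatz N b a \<in> borel_measurable borel"
    unfolding mb_ansatz_def by measurable
  moreover have "\<bar>mb_ansatz N b a \<mu>\<bar> \<le> exp (\<Sum>l\<le>N. \<bar>a l\<bar> * B)" if "\<mu> \<in> {-1..1}" for \<mu>
    using exponent[OF that] unfolding mb_ansatz_def by simp
  ultimately show ?thesis
    unfolding bounded_borel_def by blast
qed

section \<open>The kinetic density behind the update\<close>

definition kinetic_flux :: "(real \<Rightarrow> real) \<Rightarrow> (real \<Rightarrow> real) \<Rightarrow> real \<Rightarrow> real" where
  "kinetic_flux \<psi>v \<psi>w \<mu> = ((1 + \<mu>) * \<psi>v \<mu> - (1 - \<mu>) * \<psi>w \<mu>) / 2"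

lemma (in moment_functional) kinetic_flux_moment:
  assumes "K \<psi>v" "K (\<lambda>\<mu>. \<mu> * \<psi>v \<mu>)" "K \<psi>w" "K (\<lambda>\<mu>. \<mu> * \<psi>w \<mu>)"
  shows "K (kinetic_flux \<psi>v \<psi>w)"
    and "A (kinetic_flux \<psi>v \<psi>w) = (A (\<lambda>\<mu>. \<mu> * \<psi>v \<mu>) + A (\<lambda>\<mu>. \<mu> * \<psi>w \<mu>) - (A \<psi>w - A \<psi>v)) / 2"
proof -
  define lf where "lf \<mu> = (\<mu> * \<psi>v \<mu> + \<mu> * \<psi>w \<mu>) - (\<psi>w \<mu> - \<psi>v \<mu>)" for \<mu>
  have eq: "kinetic_flux \<psi>v \<psi>w = (\<lambda>\<mu>. (1/2) * lf \<mu>)"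
    by (auto simp: kinetic_flux_def lf_def field_simps)
  have K_lf: "K lf"
    unfolding lf_def using assms by (intro K_diff K_add)
  then show "K (kinetic_flux \<psi>v \<psi>w)"
    unfolding eq by (rule K_scale)
  have "A lf = A (\<lambda>\<mu>. \<mu> * \<psi>v \<mu>) + A (\<lambda>\<mu>. \<mu> * \<psi>w \<mu>) - (A \<psi>w - A \<psi>v)"
    unfolding lf_def using assms by (simp add: A_diff A_add K_diff K_add)
  then show "A (kinetic_flux \<psi>v \<psi>w) = (A (\<lambda>\<mu>. \<mu> * \<psi>v \<mu>) + A (\<lambda>\<mu>. \<mu> * \<psi>w \<mu>) - (A \<psi>w - A \<psi>v)) / 2"
    unfolding eq A_scale[OF K_lf] by simp
qed

definition collision_gain ::
  "((real \<Rightarrow> real) \<Rightarrow> real) \<Rightarrow> (real \<Rightarrow> real \<Rightarrow> real) \<Rightarrow> (real \<Rightarrow> real) \<Rightarrow> real \<Rightarrow> real" where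
  "collision_gain A T \<psi> \<mu> = A (\<lambda>\<mu>'. T \<mu> \<mu>' * \<psi> \<mu>')"

lemma (in moment_functional) collision_moment:
  assumes T_norm: "\<And>\<mu>. \<mu> \<in> D \<Longrightarrow> A (\<lambda>\<mu>'. T \<mu>' \<mu>) = 1"
    and K_gain: "K (\<lambda>\<mu>. \<beta> \<mu> * collision_gain A T \<psi> \<mu>)" and K_loss: "K (\<lambda>\<mu>. \<beta> \<mu> * \<psi> \<mu>)"
  shows "A (\<lambda>\<mu>. \<beta> \<mu> * coll A T \<psi> \<mu>) = A (\<lambda>\<mu>. \<beta> \<mu> * collision_gain A T \<psi> \<mu>) - A (\<lambda>\<mu>. \<beta> \<mu> * \<psi> \<mu>)"
proof -
  have "A (\<lambda>\<mu>. \<beta> \<mu> * coll A T \<psi> \<mu>) = A (\<lambda>\<mu>. \<beta> \<mu> * collision_gain A T \<psi> \<mu> - \<beta> \<mu> * \<psi> \<mu>)"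
    by (rule A_cong) (simp add: coll_def collision_gain_def T_norm right_diff_distrib)
  also have "\<dots> = A (\<lambda>\<mu>. \<beta> \<mu> * collision_gain A T \<psi> \<mu>) - A (\<lambda>\<mu>. \<beta> \<mu> * \<psi> \<mu>)"
    using K_gain K_loss by (rule A_diff)
  finally show ?thesis .
qed

lemma borel_measurable_collision_gain:
  assumes T: "(\<lambda>(\<mu>, \<mu>'). T \<mu> \<mu>') \<in> borel_measurable borel" and \<psi>: "\<psi> \<in> borel_measurable borel"
  shows "collision_gain ang T \<psi> \<in> borel_measurable borel"
proof -
  have "(\<lambda>x. T (fst x) (snd x)) \<in> borel_measurable (borel \<Otimes>\<^sub>M borel)"
    using T unfolding borel_prod by (simp add: case_prod_beta')
  then have "(\<lambda>x. indicator {-1..1::real} (snd x) *\<^sub>R (T (fst x) (snd x) * \<psi> (snd x)))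
      \<in> borel_measurable (borel \<Otimes>\<^sub>M borel)"
    using \<psi> by measurable
  then have "(\<lambda>x. indicator {-1..1::real} (snd x) *\<^sub>R (T (fst x) (snd x) * \<psi> (snd x)))
      \<in> borel_measurable (borel \<Otimes>\<^sub>M lborel)"
    by (subst measurable_cong_sets[OF sets_pair_measure_cong[OF refl sets_lborel] refl])
  then have "case_prod (\<lambda>\<mu> \<mu>'. indicator {-1..1::real} \<mu>' *\<^sub>R (T \<mu> \<mu>' * \<psi> \<mu>'))
      \<in> borel_measurable (borel \<Otimes>\<^sub>M lborel)"
    by (simp add: case_prod_beta')
  from lborel.borel_measurable_lebesgue_integral[OF this] show ?thesis
    unfolding collision_gain_def ang_def set_lebesgue_integral_def .
qed

lemma collision_gain_nonneg:
  assumes "\<And>\<mu>'. \<mu>' \<in> {-1..1} \<Longrightarrow> 0 \<le> T \<mu> \<mu>' * \<psi> \<mu>'"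
  shows "0 \<le> collision_gain ang T \<psi> \<mu>"
  unfolding collision_gain_def ang_def set_lebesgue_integral_def
  using assms by (intro Bochner_Integration.integral_nonneg) (simp add: indicator_def)

lemma bounded_borel_collision_gain:
  assumes T_meas: "(\<lambda>(\<mu>, \<mu>'). T \<mu> \<mu>') \<in> borel_measurable borel"
    and T_bdd: "\<exists>B. \<forall>\<mu>\<in>{-1..1}. \<forall>\<mu>'\<in>{-1..1}. T \<mu> \<mu>' \<le> B"
    and T_pos: "\<And>\<mu> \<mu>'. \<mu> \<in> {-1..1} \<Longrightarrow> \<mu>' \<in> {-1..1} \<Longrightarrow> 0 < T \<mu> \<mu>'"
    and \<psi>: "bounded_borel \<psi>" and \<psi>_nonneg: "\<And>\<mu>. 0 \<le> \<psi> \<mu>"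
  shows "bounded_borel (collision_gain ang T \<psi>)"
proof -
  obtain BT where BT: "\<forall>\<mu>\<in>{-1..1}. \<forall>\<mu>'\<in>{-1..1}. T \<mu> \<mu>' \<le> BT" using T_bdd by blast
  obtain B\<psi> where B\<psi>: "\<forall>\<mu>\<in>{-1..1}. \<bar>\<psi> \<mu>\<bar> \<le> B\<psi>" and \<psi>_meas: "\<psi> \<in> borel_measurable borel"
    using \<psi> unfolding bounded_borel_def by blast
  have T_row: "bounded_borel (T \<mu>)" if "\<mu> \<in> {-1..1}" for \<mu>
  proof -
    have "(\<lambda>\<mu>'. (\<lambda>(a, b). T a b) (\<mu>, \<mu>')) \<in> borel_measurable borel"
      using T_meas by measurable
    then show ?thesis
      unfolding bounded_borel_def using BT T_pos that
      by (intro conjI exI[of _ BT]) (auto simp: less_imp_le)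
  qed
  have upper: "collision_gain ang T \<psi> \<mu> \<le> ang (\<lambda>_. BT * B\<psi>)" if \<mu>: "\<mu> \<in> {-1..1}" for \<mu>
    unfolding collision_gain_def ang_def
  proof (rule set_integral_mono)
    show "set_integrable lborel {-1..1} (\<lambda>\<mu>'. T \<mu> \<mu>' * \<psi> \<mu>')"
      by (intro set_integrable_bounded_borel bounded_borel_mult T_row[OF \<mu>] \<psi>)
    show "set_integrable lborel {-1..1::real} (\<lambda>_. BT * B\<psi>)"
      by (intro set_integrable_bounded_borel bounded_borel_const)
    show "T \<mu> \<mu>' * \<psi> \<mu>' \<le> BT * B\<psi>" if \<mu>': "\<mu>' \<in> {-1..1}" for \<mu>'
    proof (rule mult_mono)
      show "T \<mu> \<mu>' \<le> BT" using BT \<mu> \<mu>' by blast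
      show "\<psi> \<mu>' \<le> B\<psi>" using B\<psi> \<mu>' abs_le_D1 by blast
      show "0 \<le> BT" using T_pos[OF \<mu> \<mu>'] \<open>T \<mu> \<mu>' \<le> BT\<close> by linarith
    qed (rule \<psi>_nonneg)
  qed
  have "0 \<le> collision_gain ang T \<psi> \<mu>" if "\<mu> \<in> {-1..1}" for \<mu>
    using T_pos[OF that] \<psi>_nonneg by (intro collision_gain_nonneg) (simp add: less_imp_le)
  then show ?thesis
    unfolding bounded_borel_def using upper borel_measurable_collision_gain[OF T_meas \<psi>_meas]
    by (intro conjI exI[of _ "ang (\<lambda>_. BT * B\<psi>)"]) (auto simp: abs_le_iff)
qed

definition euler_density :: "nat \<Rightarrow> (nat \<Rightarrow> real) \<Rightarrow> real \<Rightarrow> real \<Rightarrow> real \<Rightarrow> real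
    \<Rightarrow> (nat \<Rightarrow> real \<Rightarrow> real) \<Rightarrow> (nat \<Rightarrow> real \<Rightarrow> real) \<Rightarrow> (nat \<Rightarrow> real \<Rightarrow> real)
    \<Rightarrow> (real \<Rightarrow> real) \<Rightarrow> (real \<Rightarrow> real) \<Rightarrow> real \<Rightarrow> real" where
  "euler_density Q w \<sigma>t \<sigma>s dt lam \<psi> G Z \<psi>L \<psi>R \<mu> =
     (\<Sum>q=1..Q. w q * ((1 - \<sigma>t * dt) * \<psi> q \<mu> + dt * \<sigma>s * G q \<mu> + dt * Z q \<mu>))
     - lam * (kinetic_flux (\<psi> Q) \<psi>R \<mu> - kinetic_flux \<psi>L (\<psi> 1) \<mu>)"

lemma (in moment_functional) euler_density_moment:
  assumes K_nodes: "\<And>q. q \<in> {1..Q} \<Longrightarrow> K (\<psi> q) \<and> K (G q) \<and> K (Z q)"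
    and K_flux: "K (kinetic_flux (\<psi> Q) \<psi>R)" "K (kinetic_flux \<psi>L (\<psi> 1))"
  shows "K (euler_density Q w \<sigma>t \<sigma>s dt lam \<psi> G Z \<psi>L \<psi>R)"
    and "A (euler_density Q w \<sigma>t \<sigma>s dt lam \<psi> G Z \<psi>L \<psi>R)
       = (\<Sum>q=1..Q. w q * ((1 - \<sigma>t * dt) * A (\<psi> q) + dt * \<sigma>s * A (G q) + dt * A (Z q)))
         - lam * (A (kinetic_flux (\<psi> Q) \<psi>R) - A (kinetic_flux \<psi>L (\<psi> 1)))"
proof -
  define h where "h q \<mu> = w q * ((1 - \<sigma>t * dt) * \<psi> q \<mu> + dt * \<sigma>s * G q \<mu> + dt * Z q \<mu>)" for q \<mu>
  have K_h: "K (h q)" and A_h: "A (h q) = w q * ((1 - \<sigma>t * dt) * A (\<psi> q) + dt * \<sigma>s * A (G q) + dt * A (Z q))"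
    if "q \<in> {1..Q}" for q
    using K_nodes[OF that] unfolding h_def by (simp_all add: K_add K_scale A_add A_scale)
  have K_sum_h: "K (\<lambda>\<mu>. \<Sum>q\<in>{1..Q}. h q \<mu>)" by (rule K_sum) (simp_all add: K_h)
  have K_jump: "K (\<lambda>\<mu>. lam * (kinetic_flux (\<psi> Q) \<psi>R \<mu> - kinetic_flux \<psi>L (\<psi> 1) \<mu>))"
    using K_flux by (intro K_scale K_diff)
  have eq: "euler_density Q w \<sigma>t \<sigma>s dt lam \<psi> G Z \<psi>L \<psi>R
      = (\<lambda>\<mu>. (\<Sum>q\<in>{1..Q}. h q \<mu>) - lam * (kinetic_flux (\<psi> Q) \<psi>R \<mu> - kinetic_flux \<psi>L (\<psi> 1) \<mu>))"
    by (simp add: euler_density_def h_def fun_eq_iff)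
  show "K (euler_density Q w \<sigma>t \<sigma>s dt lam \<psi> G Z \<psi>L \<psi>R)"
    unfolding eq using K_sum_h K_jump by (rule K_diff)
  have "A (\<lambda>\<mu>. \<Sum>q\<in>{1..Q}. h q \<mu>) = (\<Sum>q\<in>{1..Q}. A (h q))"
    by (rule A_sum) (simp_all add: K_h)
  also have "\<dots> = (\<Sum>q=1..Q. w q * ((1 - \<sigma>t * dt) * A (\<psi> q) + dt * \<sigma>s * A (G q) + dt * A (Z q)))"
    by (rule sum.cong) (simp_all add: A_h)
  finally show "A (euler_density Q w \<sigma>t \<sigma>s dt lam \<psi> G Z \<psi>L \<psi>R)
      = (\<Sum>q=1..Q. w q * ((1 - \<sigma>t * dt) * A (\<psi> q) + dt * \<sigma>s * A (G q) + dt * A (Z q)))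
        - lam * (A (kinetic_flux (\<psi> Q) \<psi>R) - A (kinetic_flux \<psi>L (\<psi> 1)))"
    unfolding eq using K_sum_h K_jump K_flux by (simp add: A_diff A_scale K_diff)
qed

definition dg_density ::
  "((real \<Rightarrow> real) \<Rightarrow> real) \<Rightarrow> (real \<Rightarrow> real \<Rightarrow> real) \<Rightarrow> nat \<Rightarrow> (nat \<Rightarrow> real \<Rightarrow> real)
   \<Rightarrow> (mvec \<Rightarrow> mvec) \<Rightarrow> real \<Rightarrow> real \<Rightarrow> (real \<Rightarrow> real \<Rightarrow> real \<Rightarrow> real) \<Rightarrow> real
   \<Rightarrow> real \<Rightarrow> real \<Rightarrow> real \<Rightarrow> nat \<Rightarrow> (nat \<Rightarrow> real) \<Rightarrow> (nat \<Rightarrow> real)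
   \<Rightarrow> (nat \<Rightarrow> real poly) \<Rightarrow> mvec \<Rightarrow> mvec \<Rightarrow> real \<Rightarrow> real" where
  "dg_density A T N b \<alpha> \<sigma>a \<sigma>s S tn xj dx dt Q y w p uL uR =
     euler_density Q w (\<sigma>a + \<sigma>s) \<sigma>s dt (dt / dx)
       (\<lambda>q. mb_ansatz N b (\<alpha> (pt_val p xj dx y q)))
       (\<lambda>q. collision_gain A T (mb_ansatz N b (\<alpha> (pt_val p xj dx y q))))
       (\<lambda>q. S tn (xj + y q * dx))
       (mb_ansatz N b (\<alpha> uL)) (mb_ansatz N b (\<alpha> uR))"

lemma cell_mean_gauss_lobatto:
  assumes GL: "gauss_lobatto Q y w" and dx: "0 < dx" and deg: "degree (p l) \<le> 2*Q - 3"
  shows "cell_mean p xj dx l = (\<Sum>q=1..Q. w q * pt_val p xj dx y q l)"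
proof -
  let ?r = "pcompose (p l) [:xj, dx:]"
  have "degree ?r = degree (p l)"
    using dx by (simp add: degree_pcompose)
  then have "integral {-1/2..1/2} (poly ?r) = (\<Sum>q=1..Q. w q * poly ?r (y q))"
    using GL deg unfolding gauss_lobatto_def by simp
  moreover have r: "poly ?r = (\<lambda>t. poly (p l) (dx * t + xj))"
    by (auto simp: poly_pcompose algebra_simps)
  moreover have "((\<lambda>t. poly (p l) (dx * t + xj)) has_integral cell_mean p xj dx l) {-1/2..1/2}"
  proof -
    have "(poly (p l) has_integral integral {xj - dx/2 .. xj + dx/2} (poly (p l))) (cbox (xj - dx/2) (xj + dx/2))"
      by (auto intro!: integrable_integral integrable_continuous_interval continuous_intros)
    from has_integral_affinity'[OF this dx, of xj] show ?thesis
      using dx by (simp add: cell_mean_def field_simps)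
  qed
  ultimately show ?thesis
    by (simp add: integral_unique pt_val_def algebra_simps)
qed

lemma (in moment_functional) num_flux_moment:
  assumes closure: "is_mb_closure A R N b \<alpha>" and R: "R v" "R w" and l: "l \<le> N"
    and K_ansatz: "\<And>a. K (\<lambda>\<mu>. b l \<mu> * mb_ansatz N b a \<mu>)"
      "\<And>a. K (\<lambda>\<mu>. b l \<mu> * (\<mu> * mb_ansatz N b a \<mu>))"
  shows "num_flux (mflux A N b \<alpha>) v w l
    = A (\<lambda>\<mu>. b l \<mu> * kinetic_flux (mb_ansatz N b (\<alpha> v)) (mb_ansatz N b (\<alpha> w)) \<mu>)"
proof -
  interpret M: moment_functional D "\<lambda>g. K (\<lambda>\<mu>. b l \<mu> * g \<mu>)" "\<lambda>g. A (\<lambda>\<mu>. b l \<mu> * g \<mu>)"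
    by (rule weighted_moment_functional)
  have "A (\<lambda>\<mu>. b l \<mu> * mb_ansatz N b (\<alpha> u) \<mu>) = u l" if "R u" for u
    using closure that l unfolding is_mb_closure_def by blast
  then show ?thesis
    using R unfolding num_flux_def M.kinetic_flux_moment(2)[OF K_ansatz(1,2,1,2)]
    by (simp add: mflux_def ac_simps)
qed

lemma dg_mean_update_eq:
  assumes mean: "cell_mean p xj dx l = (\<Sum>q=1..Q. w q * pt_val p xj dx y q l)"
    and nodes: "\<And>q. q \<in> {1..Q} \<Longrightarrow> pt_val p xj dx y q l = m q"
    and gain: "\<And>q. q \<in> {1..Q} \<Longrightarrow> mcoll A T N b \<alpha> (pt_val p xj dx y q) l = g q - m q"
    and source: "\<And>q. q \<in> {1..Q} \<Longrightarrow> A (\<lambda>\<mu>. b l \<mu> * S tn (xj + y q * dx) \<mu>) = z q"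
    and flux: "num_flux (mflux A N b \<alpha>) (pt_val p xj dx y Q) uR l = fR"
      "num_flux (mflux A N b \<alpha>) uL (pt_val p xj dx y 1) l = fL"
  shows "dg_mean_update A T N b \<alpha> \<sigma>a \<sigma>s S tn xj dx dt Q y w p uL uR l
    = (\<Sum>q=1..Q. w q * ((1 - (\<sigma>a + \<sigma>s) * dt) * m q + dt * \<sigma>s * g q + dt * z q))
      - dt / dx * (fR - fL)"
proof -
  have nodes_mean: "(\<Sum>q=1..Q. w q * pt_val p xj dx y q l) = (\<Sum>q=1..Q. w q * m q)"
    by (rule sum.cong) (simp_all add: nodes)
  have nodes_source: "(\<Sum>q=1..Q. w q * (- \<sigma>a * pt_val p xj dx y q l
        + \<sigma>s * mcoll A T N b \<alpha> (pt_val p xj dx y q) l + A (\<lambda>\<mu>. b l \<mu> * S tn (xj + y q * dx) \<mu>)))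
      = (\<Sum>q=1..Q. w q * (- \<sigma>a * m q + \<sigma>s * (g q - m q) + z q))"
    by (rule sum.cong) (simp_all add: nodes gain source)
  show ?thesis
    unfolding dg_mean_update_def mean nodes_mean nodes_source flux
    by (simp add: sum_distrib_left sum.distrib[symmetric] algebra_simps)
qed

lemma (in moment_functional) dg_mean_update_moment:
  assumes closure: "is_mb_closure A R N b \<alpha>"
    and R_nodes: "\<And>q. q \<in> {1..Q} \<Longrightarrow> R (pt_val p xj dx y q)" and R_L: "R uL" and R_R: "R uR"
    and T_norm: "\<And>\<mu>. \<mu> \<in> D \<Longrightarrow> A (\<lambda>\<mu>'. T \<mu>' \<mu>) = 1"
    and mean: "cell_mean p xj dx l = (\<Sum>q=1..Q. w q * pt_val p xj dx y q l)"
    and Q: "1 \<le> Q" and l: "l \<le> N"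
    and K_ansatz: "\<And>a. K (\<lambda>\<mu>. b l \<mu> * mb_ansatz N b a \<mu>)"
      "\<And>a. K (\<lambda>\<mu>. b l \<mu> * (\<mu> * mb_ansatz N b a \<mu>))"
    and K_gain: "\<And>a. K (\<lambda>\<mu>. b l \<mu> * collision_gain A T (mb_ansatz N b a) \<mu>)"
    and K_source: "\<And>q. q \<in> {1..Q} \<Longrightarrow> K (\<lambda>\<mu>. b l \<mu> * S tn (xj + y q * dx) \<mu>)"
  shows "K (\<lambda>\<mu>. b l \<mu> * dg_density A T N b \<alpha> \<sigma>a \<sigma>s S tn xj dx dt Q y w p uL uR \<mu>)"
    and "dg_mean_update A T N b \<alpha> \<sigma>a \<sigma>s S tn xj dx dt Q y w p uL uR l
       = A (\<lambda>\<mu>. b l \<mu> * dg_density A T N b \<alpha> \<sigma>a \<sigma>s S tn xj dx dt Q y w p uL uR \<mu>)"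
proof -
  interpret M: moment_functional D "\<lambda>g. K (\<lambda>\<mu>. b l \<mu> * g \<mu>)" "\<lambda>g. A (\<lambda>\<mu>. b l \<mu> * g \<mu>)"
    by (rule weighted_moment_functional)
  define \<psi> where "\<psi> q = mb_ansatz N b (\<alpha> (pt_val p xj dx y q))" for q
  define \<psi>L where "\<psi>L = mb_ansatz N b (\<alpha> uL)"
  define \<psi>R where "\<psi>R = mb_ansatz N b (\<alpha> uR)"
  define G where "G q = collision_gain A T (\<psi> q)" for q
  define Z where "Z q = S tn (xj + y q * dx)" for q
  have density: "dg_density A T N b \<alpha> \<sigma>a \<sigma>s S tn xj dx dt Q y w p uL uR
      = euler_density Q w (\<sigma>a + \<sigma>s) \<sigma>s dt (dt / dx) \<psi> G Z \<psi>L \<psi>R"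
    unfolding dg_density_def \<psi>_def G_def Z_def \<psi>L_def \<psi>R_def ..
  have K_nodes: "K (\<lambda>\<mu>. b l \<mu> * \<psi> q \<mu>) \<and> K (\<lambda>\<mu>. b l \<mu> * G q \<mu>) \<and> K (\<lambda>\<mu>. b l \<mu> * Z q \<mu>)"
    if "q \<in> {1..Q}" for q
    unfolding \<psi>_def G_def Z_def using K_ansatz K_gain K_source[OF that] by blast
  have K_flux: "K (\<lambda>\<mu>. b l \<mu> * kinetic_flux (mb_ansatz N b a) (mb_ansatz N b a') \<mu>)" for a a'
    by (rule M.kinetic_flux_moment(1)[OF K_ansatz(1,2,1,2)])
  note euler = M.euler_density_moment[of Q \<psi> G Z \<psi>R \<psi>L w "\<sigma>a + \<sigma>s" \<sigma>s dt "dt / dx", OF K_nodes]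
  show "K (\<lambda>\<mu>. b l \<mu> * dg_density A T N b \<alpha> \<sigma>a \<sigma>s S tn xj dx dt Q y w p uL uR \<mu>)"
    unfolding density by (rule euler(1)) (simp_all add: K_flux \<psi>_def \<psi>L_def \<psi>R_def)
  have "dg_mean_update A T N b \<alpha> \<sigma>a \<sigma>s S tn xj dx dt Q y w p uL uR l
      = (\<Sum>q=1..Q. w q * ((1 - (\<sigma>a + \<sigma>s) * dt) * A (\<lambda>\<mu>. b l \<mu> * \<psi> q \<mu>)
          + dt * \<sigma>s * A (\<lambda>\<mu>. b l \<mu> * G q \<mu>) + dt * A (\<lambda>\<mu>. b l \<mu> * Z q \<mu>)))
        - dt / dx * (A (\<lambda>\<mu>. b l \<mu> * kinetic_flux (\<psi> Q) \<psi>R \<mu>)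
          - A (\<lambda>\<mu>. b l \<mu> * kinetic_flux \<psi>L (\<psi> 1) \<mu>))"
  proof (rule dg_mean_update_eq[OF mean])
    show "pt_val p xj dx y q l = A (\<lambda>\<mu>. b l \<mu> * \<psi> q \<mu>)" if "q \<in> {1..Q}" for q
      using closure R_nodes[OF that] l unfolding is_mb_closure_def \<psi>_def by simp
    show "mcoll A T N b \<alpha> (pt_val p xj dx y q) l
        = A (\<lambda>\<mu>. b l \<mu> * G q \<mu>) - A (\<lambda>\<mu>. b l \<mu> * \<psi> q \<mu>)" for q
      unfolding mcoll_def G_def \<psi>_def by (rule collision_moment[OF T_norm K_gain K_ansatz(1)])
    show "num_flux (mflux A N b \<alpha>) (pt_val p xj dx y Q) uR l
        = A (\<lambda>\<mu>. b l \<mu> * kinetic_flux (\<psi> Q) \<psi>R \<mu>)"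
      unfolding \<psi>_def \<psi>R_def using Q by (intro num_flux_moment[OF closure R_nodes R_R l K_ansatz]) auto
    show "num_flux (mflux A N b \<alpha>) uL (pt_val p xj dx y 1) l
        = A (\<lambda>\<mu>. b l \<mu> * kinetic_flux \<psi>L (\<psi> 1) \<mu>)"
      unfolding \<psi>_def \<psi>L_def using Q by (intro num_flux_moment[OF closure R_L R_nodes l K_ansatz]) auto
  qed (simp add: Z_def)
  also have "\<dots> = A (\<lambda>\<mu>. b l \<mu> * euler_density Q w (\<sigma>a + \<sigma>s) \<sigma>s dt (dt / dx) \<psi> G Z \<psi>L \<psi>R \<mu>)"
    by (rule euler(2)[symmetric]) (simp_all add: K_flux \<psi>_def \<psi>L_def \<psi>R_def)
  finally show "dg_mean_update A T N b \<alpha> \<sigma>a \<sigma>s S tn xj dx dt Q y w p uL uR l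
       = A (\<lambda>\<mu>. b l \<mu> * dg_density A T N b \<alpha> \<sigma>a \<sigma>s S tn xj dx dt Q y w p uL uR \<mu>)"
    unfolding density .
qed

section \<open>Positivity under the CFL condition\<close>

lemma sum_ge_first_last:
  fixes f :: "nat \<Rightarrow> real"
  assumes "2 \<le> Q" and "\<And>q. q \<in> {1..Q} \<Longrightarrow> 0 \<le> f q"
  shows "f 1 + f Q \<le> (\<Sum>q=1..Q. f q)"
proof -
  have "f 1 + f Q = sum f {1, Q}" using assms(1) by simp
  also have "\<dots> \<le> sum f {1..Q}" by (rule sum_mono2) (use assms in auto)
  finally show ?thesis .
qed

lemma kinetic_flux_jump_le:
  assumes "\<bar>\<mu>\<bar> \<le> 1" and "0 \<le> \<psi>v \<mu>" "0 \<le> \<psi>w \<mu>" "0 \<le> \<psi>L \<mu>" "0 \<le> \<psi>R \<mu>"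
  shows "kinetic_flux \<psi>v \<psi>R \<mu> - kinetic_flux \<psi>L \<psi>w \<mu> \<le> \<psi>v \<mu> + \<psi>w \<mu>"
proof -
  have "(1 + \<mu>) * \<psi>v \<mu> \<le> 2 * \<psi>v \<mu>" "(1 - \<mu>) * \<psi>w \<mu> \<le> 2 * \<psi>w \<mu>"
    using assms by (intro mult_right_mono; simp)+
  moreover have "0 \<le> (1 - \<mu>) * \<psi>R \<mu>" "0 \<le> (1 + \<mu>) * \<psi>L \<mu>"
    using assms by simp_all
  ultimately show ?thesis unfolding kinetic_flux_def by argo
qed

lemma euler_density_pos:
  fixes \<psi> G Z :: "nat \<Rightarrow> real \<Rightarrow> real"
  assumes Q: "2 \<le> Q" and w: "\<And>q. q \<in> {1..Q} \<Longrightarrow> 0 < w q" "w 1 = w Q"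
    and \<mu>: "\<bar>\<mu>\<bar> \<le> 1"
    and \<psi>: "\<And>q. 0 < \<psi> q \<mu>" and G: "\<And>q. 0 \<le> G q \<mu>" and Z: "\<And>q. 0 \<le> Z q \<mu>"
    and \<psi>LR: "0 \<le> \<psi>L \<mu>" "0 \<le> \<psi>R \<mu>"
    and nonneg: "0 \<le> \<sigma>s" "0 \<le> dt" "0 \<le> lam"
    and CFL: "lam < w Q * (1 - \<sigma>t * dt)"
  shows "0 < euler_density Q w \<sigma>t \<sigma>s dt lam \<psi> G Z \<psi>L \<psi>R \<mu>"
proof -
  define c where "c = 1 - \<sigma>t * dt"
  define f where "f q = w q * (c * \<psi> q \<mu> + dt * \<sigma>s * G q \<mu> + dt * Z q \<mu>)" for q
  have wQ: "0 < w Q" using w(1) Q by simp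
  have c: "0 < c"
  proof (rule ccontr)
    assume "\<not> 0 < c"
    then have "w Q * c \<le> 0" using wQ mult_nonneg_nonpos[of "w Q" c] by simp
    then show False using CFL nonneg(3) unfolding c_def by linarith
  qed
  have f_ge: "w q * c * \<psi> q \<mu> \<le> f q" if "q \<in> {1..Q}" for q
  proof -
    have "c * \<psi> q \<mu> \<le> c * \<psi> q \<mu> + dt * \<sigma>s * G q \<mu> + dt * Z q \<mu>"
      using nonneg G Z by simp
    then show ?thesis unfolding f_def using w(1)[OF that] by (simp add: mult.assoc)
  qed
  have "w Q * c * (\<psi> 1 \<mu> + \<psi> Q \<mu>) \<le> f 1 + f Q"
    using f_ge[of 1] f_ge[of Q] Q w(2) by (simp add: distrib_left)
  also have "\<dots> \<le> (\<Sum>q=1..Q. f q)"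
  proof (rule sum_ge_first_last[OF Q])
    show "0 \<le> f q" if "q \<in> {1..Q}" for q
      using f_ge[OF that] mult_pos_pos[OF mult_pos_pos[OF w(1)[OF that] c] \<psi>[of q]] by linarith
  qed
  finally have interior: "w Q * c * (\<psi> 1 \<mu> + \<psi> Q \<mu>) \<le> (\<Sum>q=1..Q. f q)" .
  have "lam * (kinetic_flux (\<psi> Q) \<psi>R \<mu> - kinetic_flux \<psi>L (\<psi> 1) \<mu>) \<le> lam * (\<psi> Q \<mu> + \<psi> 1 \<mu>)"
    using kinetic_flux_jump_le[OF \<mu>, of "\<psi> Q" "\<psi> 1" \<psi>L \<psi>R] \<psi> \<psi>LR nonneg(3)
    by (intro mult_left_mono) (auto simp: less_imp_le)
  moreover have "0 < (w Q * c - lam) * (\<psi> 1 \<mu> + \<psi> Q \<mu>)"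
    using CFL \<psi> unfolding c_def by (intro mult_pos_pos add_pos_pos) simp_all
  moreover have "euler_density Q w \<sigma>t \<sigma>s dt lam \<psi> G Z \<psi>L \<psi>R \<mu>
      = (\<Sum>q=1..Q. f q) - lam * (kinetic_flux (\<psi> Q) \<psi>R \<mu> - kinetic_flux \<psi>L (\<psi> 1) \<mu>)"
    unfolding euler_density_def f_def c_def ..
  moreover have "(w Q * c - lam) * (\<psi> 1 \<mu> + \<psi> Q \<mu>) = w Q * c * (\<psi> 1 \<mu> + \<psi> Q \<mu>) - lam * (\<psi> Q \<mu> + \<psi> 1 \<mu>)"
    by (simp add: algebra_simps)
  ultimately show ?thesis using interior by linarith
qed

lemma dg_density_pos:
  assumes GL: "gauss_lobatto Q y w" and CFL: "dt / dx < w Q * (1 - (\<sigma>a + \<sigma>s) * dt)"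
    and "0 < dx" "0 < dt" "0 \<le> \<sigma>s" and \<mu>: "\<mu> \<in> {-1..1}"
    and gain: "\<And>a. 0 \<le> collision_gain A T (mb_ansatz N b a) \<mu>"
    and source: "\<And>q. 0 \<le> S tn (xj + y q * dx) \<mu>"
  shows "0 < dg_density A T N b \<alpha> \<sigma>a \<sigma>s S tn xj dx dt Q y w p uL uR \<mu>"
proof -
  have "2 \<le> Q" "\<And>q. q \<in> {1..Q} \<Longrightarrow> 0 < w q" "w 1 = w Q"
    using GL unfolding gauss_lobatto_def by auto
  then show ?thesis
    unfolding dg_density_def
    by (rule euler_density_pos) (use assms in \<open>auto simp: mb_ansatz_def less_imp_le\<close>)
qed

section \<open>Realizability of the updated cell means\<close>

lemma dg_mean_update_realizable:
  assumes basis0: "\<And>\<mu>. b 0 \<mu> = 1"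
    and basis_meas: "\<And>l. l \<le> N \<Longrightarrow> b l \<in> borel_measurable borel"
    and basis_bdd: "\<exists>B. \<forall>l\<le>N. \<forall>\<mu>\<in>{-1..1}. \<bar>b l \<mu>\<bar> \<le> B"
    and T_meas: "(\<lambda>(\<mu>, \<mu>'). T \<mu> \<mu>') \<in> borel_measurable borel"
    and T_bdd: "\<exists>B. \<forall>\<mu>\<in>{-1..1}. \<forall>\<mu>'\<in>{-1..1}. T \<mu> \<mu>' \<le> B"
    and T_pos: "\<And>\<mu> \<mu>'. \<mu> \<in> {-1..1} \<Longrightarrow> \<mu>' \<in> {-1..1} \<Longrightarrow> 0 < T \<mu> \<mu>'"
    and T_norm: "\<And>\<mu>. \<mu> \<in> {-1..1} \<Longrightarrow> ang (\<lambda>\<mu>'. T \<mu>' \<mu>) = 1"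
    and S_nonneg: "\<And>x \<mu>. \<mu> \<in> {-1..1} \<Longrightarrow> 0 \<le> S tn x \<mu>"
    and S_int: "\<And>q. q \<in> {1..Q} \<Longrightarrow> set_integrable lborel {-1..1::real} (S tn (xj + y q * dx))"
    and GL: "gauss_lobatto Q y w" and deg: "\<And>l. l \<le> N \<Longrightarrow> degree (p l) \<le> 2*Q - 3"
    and CFL: "dt / dx < w Q * (1 - (\<sigma>a + \<sigma>s) * dt)"
    and dx: "0 < dx" and dt: "0 < dt" and \<sigma>s: "0 \<le> \<sigma>s"
    and closure: "is_mb_closure ang (realizable N b) N b \<alpha>"
    and nodes: "\<And>q. q \<in> {1..Q} \<Longrightarrow> realizable N b (pt_val p xj dx y q)"
    and uL: "realizable N b uL" and uR: "realizable N b uR"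
  shows "realizable N b (dg_mean_update ang T N b \<alpha> \<sigma>a \<sigma>s S tn xj dx dt Q y w p uL uR)"
proof -
  interpret moment_functional "{-1..1}" "set_integrable lborel {-1..1::real}" ang
    by (rule moment_functional_ang)
  define \<phi> where "\<phi> = dg_density ang T N b \<alpha> \<sigma>a \<sigma>s S tn xj dx dt Q y w p uL uR"
  have Q: "1 \<le> Q" using GL by (simp add: gauss_lobatto_def)
  have basis: "bounded_borel (b l)" if "l \<le> N" for l
    using basis_meas[OF that] basis_bdd that unfolding bounded_borel_def by blast
  have ansatz: "bounded_borel (mb_ansatz N b a)" for a
    using basis_meas basis_bdd by (rule bounded_borel_mb_ansatz)
  have ansatz_pos: "0 < mb_ansatz N b a \<mu>" for a \<mu>
    by (simp add: mb_ansatz_def)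
  have gain: "bounded_borel (collision_gain ang T (mb_ansatz N b a))" for a
    by (rule bounded_borel_collision_gain[OF T_meas T_bdd T_pos ansatz less_imp_le[OF ansatz_pos]])
  have mean: "cell_mean p xj dx l = (\<Sum>q=1..Q. w q * pt_val p xj dx y q l)" if "l \<le> N" for l
    using cell_mean_gauss_lobatto[where p=p and l=l, OF GL dx deg[OF that]] .
  have moments: "set_integrable lborel {-1..1} (\<lambda>\<mu>. b l \<mu> * \<phi> \<mu>)
      \<and> dg_mean_update ang T N b \<alpha> \<sigma>a \<sigma>s S tn xj dx dt Q y w p uL uR l = ang (\<lambda>\<mu>. b l \<mu> * \<phi> \<mu>)"
    if l: "l \<le> N" for l
    unfolding \<phi>_def
    using dg_mean_update_moment[OF closure nodes uL uR T_norm mean[OF l] Q l]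
      set_integrable_mult_bounded_borel[OF S_int basis[OF l]]
    by (simp add: set_integrable_bounded_borel bounded_borel_mult bounded_borel_ident basis[OF l]
        ansatz gain)
  have pos: "0 < \<phi> \<mu>" if \<mu>: "\<mu> \<in> {-1..1}" for \<mu>
    unfolding \<phi>_def using GL CFL dx dt \<sigma>s \<mu>
  proof (rule dg_density_pos)
    show "0 \<le> collision_gain ang T (mb_ansatz N b a) \<mu>" for a
      using T_pos[OF \<mu>] ansatz_pos by (intro collision_gain_nonneg) (simp add: less_imp_le)
  qed (rule S_nonneg[OF \<mu>])
  have int: "set_integrable lborel {-1..1::real} \<phi>"
    using moments[of 0] basis0 by simp
  show ?thesis
    unfolding realizable_def using int pos ang_pos[OF int pos] moments
    by (intro exI[of _ \<phi>]) (auto simp: less_imp_le)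
qed

lemma dg_mean_update_realizableQ:
  assumes T_pos: "\<And>\<mu> \<mu>'. \<mu> \<in> {-1..1} \<Longrightarrow> \<mu>' \<in> {-1..1} \<Longrightarrow> 0 < T \<mu> \<mu>'"
    and nodes_Q: "\<And>i. i \<in> {1..nQ} \<Longrightarrow> mu i \<in> {-1..1}"
    and weights_Q: "\<And>i. i \<in> {1..nQ} \<Longrightarrow> 0 < wt i"
    and T_norm: "\<And>i. i \<in> {1..nQ} \<Longrightarrow> angQ nQ mu wt (\<lambda>\<mu>'. T \<mu>' (mu i)) = 1"
    and S_nonneg: "\<And>x \<mu>. \<mu> \<in> {-1..1} \<Longrightarrow> 0 \<le> S tn x \<mu>"
    and GL: "gauss_lobatto Q y w" and deg: "\<And>l. l \<le> N \<Longrightarrow> degree (p l) \<le> 2*Q - 3"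
    and CFL: "dt / dx < w Q * (1 - (\<sigma>a + \<sigma>s) * dt)"
    and dx: "0 < dx" and dt: "0 < dt" and \<sigma>s: "0 \<le> \<sigma>s"
    and closure: "is_mb_closure (angQ nQ mu wt) (realizableQ N b nQ mu wt) N b \<alpha>"
    and nodes: "\<And>q. q \<in> {1..Q} \<Longrightarrow> realizableQ N b nQ mu wt (pt_val p xj dx y q)"
    and uL: "realizableQ N b nQ mu wt uL" and uR: "realizableQ N b nQ mu wt uR"
  shows "realizableQ N b nQ mu wt
    (dg_mean_update (angQ nQ mu wt) T N b \<alpha> \<sigma>a \<sigma>s S tn xj dx dt Q y w p uL uR)"
proof -
  interpret moment_functional "mu ` {1..nQ}" "\<lambda>_. True" "angQ nQ mu wt"
    by (rule moment_functional_angQ)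
  define \<phi> where "\<phi> = dg_density (angQ nQ mu wt) T N b \<alpha> \<sigma>a \<sigma>s S tn xj dx dt Q y w p uL uR"
  have Q: "1 \<le> Q" using GL by (simp add: gauss_lobatto_def)
  have mean: "cell_mean p xj dx l = (\<Sum>q=1..Q. w q * pt_val p xj dx y q l)" if "l \<le> N" for l
    using cell_mean_gauss_lobatto[where p=p and l=l, OF GL dx deg[OF that]] .
  have moments: "dg_mean_update (angQ nQ mu wt) T N b \<alpha> \<sigma>a \<sigma>s S tn xj dx dt Q y w p uL uR l
      = (\<Sum>i=1..nQ. wt i * b l (mu i) * \<phi> (mu i))"
    if l: "l \<le> N" for l
  proof -
    have "dg_mean_update (angQ nQ mu wt) T N b \<alpha> \<sigma>a \<sigma>s S tn xj dx dt Q y w p uL uR l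
        = angQ nQ mu wt (\<lambda>\<mu>. b l \<mu> * \<phi> \<mu>)"
      unfolding \<phi>_def using T_norm
      by (intro dg_mean_update_moment(2)[OF closure nodes uL uR _ mean[OF l] Q l]) auto
    then show ?thesis by (simp add: angQ_def mult.assoc)
  qed
  have pos: "0 < \<phi> (mu i)" if i: "i \<in> {1..nQ}" for i
    unfolding \<phi>_def using GL CFL dx dt \<sigma>s nodes_Q[OF i]
  proof (rule dg_density_pos)
    show "0 \<le> collision_gain (angQ nQ mu wt) T (mb_ansatz N b a) (mu i)" for a
      unfolding collision_gain_def angQ_def using T_pos nodes_Q weights_Q i
      by (intro sum_nonneg mult_nonneg_nonneg) (auto simp: mb_ansatz_def less_imp_le)
  qed (rule S_nonneg[OF nodes_Q[OF i]])
  show ?thesis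
    unfolding realizableQ_def using pos moments by (intro exI[of _ "\<lambda>i. \<phi> (mu i)"]) auto
qed

theorem mainTheorem3:
  fixes N k Q nQ :: nat
    and b :: "nat \<Rightarrow> real \<Rightarrow> real"
    and T :: "real \<Rightarrow> real \<Rightarrow> real"
    and S :: "real \<Rightarrow> real \<Rightarrow> real \<Rightarrow> real"
    and \<sigma>a \<sigma>s tn xj dx dt :: real
    and y w :: "nat \<Rightarrow> real"
    and p :: "nat \<Rightarrow> real poly"
    and uL uR :: mvec
    and \<alpha> \<alpha>Q :: "mvec \<Rightarrow> mvec"
    and mu wt :: "nat \<Rightarrow> real"
  assumes basis0: "\<And>\<mu>. b 0 \<mu> = 1"
    and basis_meas: "\<And>l. l \<le> N \<Longrightarrow> b l \<in> borel_measurable borel"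
    and basis_bdd: "\<exists>B. \<forall>l\<le>N. \<forall>\<mu>\<in>{-1..1}. \<bar>b l \<mu>\<bar> \<le> B"
    and T_meas: "(\<lambda>(\<mu>, \<mu>'). T \<mu> \<mu>') \<in> borel_measurable borel"
    and T_bdd: "\<exists>B. \<forall>\<mu>\<in>{-1..1}. \<forall>\<mu>'\<in>{-1..1}. T \<mu> \<mu>' \<le> B"
    and T_pos: "\<And>\<mu> \<mu>'. \<mu> \<in> {-1..1} \<Longrightarrow> \<mu>' \<in> {-1..1} \<Longrightarrow> 0 < T \<mu> \<mu>'"
    and T_norm: "\<And>\<mu>. \<mu> \<in> {-1..1} \<Longrightarrow> ang (\<lambda>\<mu>'. T \<mu>' \<mu>) = 1"
    and sig: "0 \<le> \<sigma>a" "0 \<le> \<sigma>s"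
    and S_nonneg: "\<And>t x \<mu>. \<mu> \<in> {-1..1} \<Longrightarrow> 0 \<le> S t x \<mu>"
    and dx_pos: "0 < dx" and dt_pos: "0 < dt"
    and GL: "gauss_lobatto Q y w"
    and deg: "k \<le> 2*Q - 3" "\<And>l. l \<le> N \<Longrightarrow> degree (p l) \<le> k"
    and CFL: "dt / dx < w Q * (1 - (\<sigma>a + \<sigma>s) * dt)"
    and quad: "1 \<le> nQ" "\<And>i. i \<in> {1..nQ} \<Longrightarrow> mu i \<in> {-1..1}"
              "\<And>i. i \<in> {1..nQ} \<Longrightarrow> 0 < wt i"
  shows "((is_mb_closure ang (realizable N b) N b \<alpha>
           \<and> (\<forall>q\<in>{1..Q}. set_integrable lborel {-1..1::real} (S tn (xj + y q * dx)))
           \<and> (\<forall>q\<in>{1..Q}. realizable N b (pt_val p xj dx y q))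
           \<and> realizable N b uL \<and> realizable N b uR)
         \<longrightarrow> realizable N b
               (dg_mean_update ang T N b \<alpha> \<sigma>a \<sigma>s S tn xj dx dt Q y w p uL uR))
       \<and> ((is_mb_closure (angQ nQ mu wt) (realizableQ N b nQ mu wt) N b \<alpha>Q
           \<and> (\<forall>i\<in>{1..nQ}. angQ nQ mu wt (\<lambda>\<mu>'. T \<mu>' (mu i)) = 1)
           \<and> (\<forall>q\<in>{1..Q}. realizableQ N b nQ mu wt (pt_val p xj dx y q))
           \<and> realizableQ N b nQ mu wt uL \<and> realizableQ N b nQ mu wt uR)
         \<longrightarrow> realizableQ N b nQ mu wt
               (dg_mean_update (angQ nQ mu wt) T N b \<alpha>Q \<sigma>a \<sigma>s S tn xj dx dt Q y w p uL uR))"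
proof -
  have deg': "\<And>l. l \<le> N \<Longrightarrow> degree (p l) \<le> 2*Q - 3"
    using deg by (meson order.trans)
  show ?thesis
  proof (intro conjI impI; elim conjE)
    assume "is_mb_closure ang (realizable N b) N b \<alpha>"
      "\<forall>q\<in>{1..Q}. set_integrable lborel {-1..1::real} (S tn (xj + y q * dx))"
      "\<forall>q\<in>{1..Q}. realizable N b (pt_val p xj dx y q)" "realizable N b uL" "realizable N b uR"
    then show "realizable N b (dg_mean_update ang T N b \<alpha> \<sigma>a \<sigma>s S tn xj dx dt Q y w p uL uR)"
      by (intro dg_mean_update_realizable) (use assms deg' in auto)
  next
    assume "is_mb_closure (angQ nQ mu wt) (realizableQ N b nQ mu wt) N b \<alpha>Q"
      "\<forall>i\<in>{1..nQ}. angQ nQ mu wt (\<lambda>\<mu>'. T \<mu>' (mu i)) = 1"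
      "\<forall>q\<in>{1..Q}. realizableQ N b nQ mu wt (pt_val p xj dx y q)"
      "realizableQ N b nQ mu wt uL" "realizableQ N b nQ mu wt uR"
    then show "realizableQ N b nQ mu wt
        (dg_mean_update (angQ nQ mu wt) T N b \<alpha>Q \<sigma>a \<sigma>s S tn xj dx dt Q y w p uL uR)"
      by (intro dg_mean_update_realizableQ) (use assms deg' in auto)
  qed
qed

end
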